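(* Let $(G,w)$ be a weighted trigraph and let $R_1,R_2\subseteq V(G)$ be disjoint. Set $\alpha_{R_1}=\alpha(\mathrm{Red}[G,w;R_1])+\mathrm{Ext}[G,w;R_1]$ and $\alpha_{R_1\cup R_2}=\alpha(\mathrm{Red}[G,w;R_1\cup R_2])+\mathrm{Ext}[G,w;R_1\cup R_2]$. Then $\alpha_{R_1}\le\alpha_{R_1\cup R_2}\le\alpha_{R_1}+\sum_{u\in R_2}w(u)$.
   Context: A trigraph $G$ consists of a finite vertex set $V(G)$ and an adjacency function $\theta_G:\binom{V(G)}{2}\to\{-1,0,1\}$; for distinct $u,v$ write $uv$ for $\{u,v\}$; $uv$ is semi-adjacent if $\theta_G(uv)=0$, and $u,v$ are anti-adjacent if $\theta_G(uv)\le 0$. A stable set is a set of pairwise anti-adjacent vertices. For $X\subseteq V(G)$, $G[X]$ is the trigraph on $X$ with the restricted adjacency function. $\mathbb N$ denotes the non-negative integers. For a trigraph $G$ let $D(G)=V(G)\cup\{(u,v):u,v\in V(G),u\neq v\}\cup\binom{V(G)}{2}$. A weight function for $G$ is a map $w:D(G)\to\mathbb N$ such that for all distinct $u,v$: if $uv$ is not semi-adjacent then $w(u,v)=w(v,u)=w(uv)=0$, and $w(u,v)\le w(uv)$. A weighted trigraph is a pair $(G,w)$ with $w$ a weight function for $G$. The weight of $S\subseteq V(G)$ is $\llbracket S\rrbracket_{(G,w)}=\sum_{u\in S}w(u)+\sum_{u\in S}\sum_{v\in V(G)\setminus S}w(u,v)+\sum_{uv\in\binom{V(G)\setminus S}{2}}w(uv)$,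 and $\alpha(G,w)=\max\{\llbracket S\rrbracket_{(G,w)}: S \text{ a stable set of } G\}$. For $R\subseteq V(G)$, the reduction $\mathrm{Red}[G,w;R]$ is the weighted trigraph $(G[R],w')$ where $w'(u)=\max\{w(u)-\sum_{v\in V(G)\setminus R}(w(uv)-w(u,v)),0\}$ for $u\in R$, and $w'(u,v)=w(u,v)$, $w'(uv)=w(uv)$ for distinct $u,v\in R$. The exterior weight is $\mathrm{Ext}[G,w;R]=\sum_{uv\in\binom{V(G)\setminus R}{2}}w(uv)+\sum_{u\in R}\sum_{v\in V(G)\setminus R}w(uv)$. *)

theory Defs
  imports Main
begin

definition pairs :: "'a set \<Rightarrow> 'a set set" where
  "pairs X = {e. e \<subseteq> X \<and> card e = 2}"

definition trigraph :: "'a set \<Rightarrow> ('a set \<Rightarrow> int) \<Rightarrow> bool" where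
  "trigraph V \<theta> \<longleftrightarrow> finite V \<and> (\<forall>e\<in>pairs V. \<theta> e \<in> {-1, 0, 1})"

text \<open>A weight function w : D(G) -> N is given by three components:
  wv on vertices, wo on ordered pairs (u,v), wu on unordered pairs uv.\<close>

definition weight_function ::
  "'a set \<Rightarrow> ('a set \<Rightarrow> int) \<Rightarrow> ('a \<Rightarrow> nat) \<Rightarrow> ('a \<Rightarrow> 'a \<Rightarrow> nat) \<Rightarrow> ('a set \<Rightarrow> nat) \<Rightarrow> bool" where
  "weight_function V \<theta> wv wo wu \<longleftrightarrow>
     (\<forall>u\<in>V. \<forall>v\<in>V. u \<noteq> v \<longrightarrow>
        (\<theta> {u, v} \<noteq> 0 \<longrightarrow> wo u v = 0 \<and> wo v u = 0 \<and> wu {u, v} = 0) \<and>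
        wo u v \<le> wu {u, v})"

definition stable_set :: "'a set \<Rightarrow> ('a set \<Rightarrow> int) \<Rightarrow> 'a set \<Rightarrow> bool" where
  "stable_set V \<theta> S \<longleftrightarrow> S \<subseteq> V \<and> (\<forall>u\<in>S. \<forall>v\<in>S. u \<noteq> v \<longrightarrow> \<theta> {u, v} \<le> 0)"

definition set_weight ::
  "'a set \<Rightarrow> ('a \<Rightarrow> nat) \<Rightarrow> ('a \<Rightarrow> 'a \<Rightarrow> nat) \<Rightarrow> ('a set \<Rightarrow> nat) \<Rightarrow> 'a set \<Rightarrow> nat" where
  "set_weight V wv wo wu S =
     (\<Sum>u\<in>S. wv u) + (\<Sum>u\<in>S. \<Sum>v\<in>V - S. wo u v) + (\<Sum>e\<in>pairs (V - S). wu e)"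

definition alpha ::
  "'a set \<Rightarrow> ('a set \<Rightarrow> int) \<Rightarrow> ('a \<Rightarrow> nat) \<Rightarrow> ('a \<Rightarrow> 'a \<Rightarrow> nat) \<Rightarrow> ('a set \<Rightarrow> nat) \<Rightarrow> nat" where
  "alpha V \<theta> wv wo wu = Max {set_weight V wv wo wu S | S. stable_set V \<theta> S}"

text \<open>Vertex weights of the reduction Red[G,w;R]; the trigraph is G[R] (vertex set R,
  restricted theta) and the pair weights are unchanged.\<close>

definition red_wv ::
  "'a set \<Rightarrow> ('a \<Rightarrow> nat) \<Rightarrow> ('a \<Rightarrow> 'a \<Rightarrow> nat) \<Rightarrow> ('a set \<Rightarrow> nat) \<Rightarrow> 'a set \<Rightarrow> 'a \<Rightarrow> nat" where
  "red_wv V wv wo wu R u =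
     nat (max (int (wv u) - (\<Sum>v\<in>V - R. int (wu {u, v}) - int (wo u v))) 0)"

definition ext_weight ::
  "'a set \<Rightarrow> ('a set \<Rightarrow> nat) \<Rightarrow> 'a set \<Rightarrow> nat" where
  "ext_weight V wu R = (\<Sum>e\<in>pairs (V - R). wu e) + (\<Sum>u\<in>R. \<Sum>v\<in>V - R. wu {u, v})"

definition alpha_red ::
  "'a set \<Rightarrow> ('a set \<Rightarrow> int) \<Rightarrow> ('a \<Rightarrow> nat) \<Rightarrow> ('a \<Rightarrow> 'a \<Rightarrow> nat) \<Rightarrow> ('a set \<Rightarrow> nat) \<Rightarrow> 'a set \<Rightarrow> nat" where
  "alpha_red V \<theta> wv wo wu R = alpha R \<theta> (red_wv V wv wo wu R) wo wu + ext_weight V wu R"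

end

theory Submission
  imports Defs
begin

text \<open>For \<open>u \<in> R\<close> let the deficit \<open>c\<^sub>R(u)\<close> be the sum of \<open>w(uv) - w(u,v)\<close> over
  \<open>v \<notin> R\<close>, so that the reduced weight of \<open>u\<close> is \<open>max (w(u) - c\<^sub>R(u)) 0\<close>. For a stable set
  \<open>S\<close> of \<open>G[R]\<close>, its weight in the reduction plus the exterior weight is its weight in \<open>G\<close>
  plus the excess \<open>max (c\<^sub>R(u) - w(u)) 0\<close> summed over \<open>u \<in> S\<close>. Removing \<open>T\<close> from a stable
  set \<open>S \<subseteq> R\<close> loses the weights \<open>w(u)\<close>, \<open>u \<in> T\<close>, but gains at least the deficits \<open>c\<^sub>R(u)\<close>,
  because the pairs between \<open>T\<close> and \<open>V - S\<close> switch from \<open>w(u,v)\<close> to \<open>w(uv)\<close>. Hence the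
  vertices of positive excess can be dropped from an optimal stable set for \<open>R\<close>, which gives
  monotonicity in \<open>R\<close>; and the vertices of \<open>R' - R\<close> can be dropped from an optimal stable set
  for \<open>R'\<close> at the price of their weights, since deficits only shrink as \<open>R\<close> grows.\<close>

lemma finite_pairs: "finite A \<Longrightarrow> finite (pairs A)"
  unfolding pairs_def by (rule finite_subset[of _ "Pow A"]) auto

lemma pairs_Un_disjoint:
  assumes "A \<inter> B = {}"
  shows "pairs (A \<union> B) = pairs A \<union> pairs B \<union> (\<lambda>(a, b). {a, b}) ` (A \<times> B)"
  using assms unfolding pairs_def card_2_iff by (auto simp: image_iff) blast+

lemma sum_pairs_Un_disjoint:
  assumes "finite A" "finite B" "A \<inter> B = {}"
  shows "sum f (pairs (A \<union> B)) = sum f (pairs A) + sum f (pairs B) + (\<Sum>a\<in>A. \<Sum>b\<in>B. f {a, b})"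
proof -
  have disj_pairs: "pairs A \<inter> pairs B = {}"
    using assms(3) unfolding pairs_def by (auto simp: card_2_iff)
  have disj_cross: "(pairs A \<union> pairs B) \<inter> (\<lambda>(a, b). {a, b}) ` (A \<times> B) = {}"
    using assms(3) unfolding pairs_def by (auto simp: card_2_iff)
  have inj: "inj_on (\<lambda>(a, b). {a, b}) (A \<times> B)"
    using assms(3) by (auto simp: inj_on_def doubleton_eq_iff)
  have "sum f (pairs (A \<union> B)) = sum f (pairs A \<union> pairs B) + sum f ((\<lambda>(a, b). {a, b}) ` (A \<times> B))"
    unfolding pairs_Un_disjoint[OF assms(3)]
    by (rule sum.union_disjoint) (use assms disj_cross finite_pairs in auto)
  also have "sum f (pairs A \<union> pairs B) = sum f (pairs A) + sum f (pairs B)"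
    by (rule sum.union_disjoint) (use assms disj_pairs finite_pairs in auto)
  also have "sum f ((\<lambda>(a, b). {a, b}) ` (A \<times> B)) = (\<Sum>(a, b)\<in>A \<times> B. f {a, b})"
    by (subst sum.reindex[OF inj]) (auto intro: sum.cong)
  also have "\<dots> = (\<Sum>a\<in>A. \<Sum>b\<in>B. f {a, b})"
    by (rule sum.cartesian_product[symmetric])
  finally show ?thesis .
qed

lemma set_weight_Diff:
  assumes "finite V" "S \<subseteq> V" "T \<subseteq> S"
  shows "set_weight V wv wo wu S + (\<Sum>u\<in>T. \<Sum>v\<in>V - S. wu {u, v})
     \<le> set_weight V wv wo wu (S - T) + (\<Sum>u\<in>T. wv u) + (\<Sum>u\<in>T. \<Sum>v\<in>V - S. wo u v)"
proof -
  have fS: "finite S"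
    using assms(1,2) by (rule finite_subset[rotated])
  have fT: "finite T"
    using fS assms(3) by (rule finite_subset[rotated])
  have vertices: "(\<Sum>u\<in>S. wv u) = (\<Sum>u\<in>S - T. wv u) + (\<Sum>u\<in>T. wv u)"
    by (rule sum.subset_diff[OF assms(3) fS])
  have ordered: "(\<Sum>u\<in>S. \<Sum>v\<in>V - S. wo u v)
      = (\<Sum>u\<in>S - T. \<Sum>v\<in>V - S. wo u v) + (\<Sum>u\<in>T. \<Sum>v\<in>V - S. wo u v)"
    by (rule sum.subset_diff[OF assms(3) fS])
  have "(\<Sum>u\<in>S - T. \<Sum>v\<in>V - S. wo u v) \<le> (\<Sum>u\<in>S - T. \<Sum>v\<in>V - (S - T). wo u v)"
    by (rule sum_mono, rule sum_mono2) (use assms(1) in auto)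
  moreover have "V - (S - T) = (V - S) \<union> T"
    using assms by auto
  then have "sum wu (pairs (V - (S - T)))
      = sum wu (pairs (V - S)) + sum wu (pairs T) + (\<Sum>v\<in>V - S. \<Sum>u\<in>T. wu {v, u})"
    using sum_pairs_Un_disjoint[of "V - S" T wu] assms(1,3) fT by auto
  moreover have "(\<Sum>v\<in>V - S. \<Sum>u\<in>T. wu {v, u}) = (\<Sum>u\<in>T. \<Sum>v\<in>V - S. wu {u, v})"
    by (subst sum.swap) (simp add: insert_commute)
  ultimately show ?thesis
    unfolding set_weight_def using vertices ordered by linarith
qed

lemma set_weight_restrict_ext:
  assumes "finite V" "R \<subseteq> V" "S \<subseteq> R"
  shows "set_weight R rw wo wu S + ext_weight V wu R + (\<Sum>u\<in>S. wv u) + (\<Sum>u\<in>S. \<Sum>v\<in>V - R. wo u v)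
    = set_weight V wv wo wu S + (\<Sum>u\<in>S. rw u) + (\<Sum>u\<in>S. \<Sum>v\<in>V - R. wu {u, v})"
proof -
  have fR: "finite R"
    using assms(1,2) by (rule finite_subset[rotated])
  have split: "V - S = (R - S) \<union> (V - R)"
    using assms by auto
  have pairs_sum: "sum wu (pairs (V - S))
      = sum wu (pairs (R - S)) + sum wu (pairs (V - R)) + (\<Sum>a\<in>R - S. \<Sum>b\<in>V - R. wu {a, b})"
    unfolding split by (rule sum_pairs_Un_disjoint) (use assms(1) fR in auto)
  have ordered: "(\<Sum>u\<in>S. \<Sum>v\<in>V - S. wo u v)
      = (\<Sum>u\<in>S. \<Sum>v\<in>R - S. wo u v) + (\<Sum>u\<in>S. \<Sum>v\<in>V - R. wo u v)"
    unfolding split sum.distrib[symmetric]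
    by (intro sum.cong refl sum.union_disjoint) (use assms(1) fR in auto)
  have cross: "(\<Sum>u\<in>R. \<Sum>v\<in>V - R. wu {u, v})
      = (\<Sum>u\<in>R - S. \<Sum>v\<in>V - R. wu {u, v}) + (\<Sum>u\<in>S. \<Sum>v\<in>V - R. wu {u, v})"
    by (rule sum.subset_diff[OF assms(3) fR])
  show ?thesis
    unfolding set_weight_def ext_weight_def using pairs_sum ordered cross by linarith
qed

lemma finite_set_weights: "finite R \<Longrightarrow> finite {set_weight R w wo wu S | S. stable_set R \<theta> S}"
  by (rule finite_subset[of _ "set_weight R w wo wu ` Pow R"]) (auto simp: stable_set_def)

lemma set_weight_le_alpha:
  "finite R \<Longrightarrow> stable_set R \<theta> S \<Longrightarrow> set_weight R w wo wu S \<le> alpha R \<theta> w wo wu"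
  unfolding alpha_def by (rule Max_ge[OF finite_set_weights]) auto

lemma alpha_attained:
  assumes "finite R"
  obtains S where "stable_set R \<theta> S" "alpha R \<theta> w wo wu = set_weight R w wo wu S"
proof -
  have "stable_set R \<theta> {}"
    by (simp add: stable_set_def)
  then have "alpha R \<theta> w wo wu \<in> {set_weight R w wo wu S | S. stable_set R \<theta> S}"
    unfolding alpha_def by (intro Max_in[OF finite_set_weights[OF assms]]) auto
  then show ?thesis
    using that by auto
qed

definition red_deficit :: "'a set \<Rightarrow> ('a \<Rightarrow> 'a \<Rightarrow> nat) \<Rightarrow> ('a set \<Rightarrow> nat) \<Rightarrow> 'a set \<Rightarrow> 'a \<Rightarrow> int" where
  "red_deficit V wo wu R u = (\<Sum>v\<in>V - R. int (wu {u, v}) - int (wo u v))"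

definition red_excess ::
  "'a set \<Rightarrow> ('a \<Rightarrow> nat) \<Rightarrow> ('a \<Rightarrow> 'a \<Rightarrow> nat) \<Rightarrow> ('a set \<Rightarrow> nat) \<Rightarrow> 'a set \<Rightarrow> 'a \<Rightarrow> int" where
  "red_excess V wv wo wu R u = max (red_deficit V wo wu R u - int (wv u)) 0"

lemma red_excess_nonneg: "0 \<le> red_excess V wv wo wu R u"
  by (simp add: red_excess_def)

lemma set_weight_red_ext:
  assumes "finite V" "R \<subseteq> V" "S \<subseteq> R"
  shows "int (set_weight R (red_wv V wv wo wu R) wo wu S) + int (ext_weight V wu R)
    = int (set_weight V wv wo wu S) + (\<Sum>u\<in>S. red_excess V wv wo wu R u)"
proof -
  have excess: "red_excess V wv wo wu R u
      = int (red_wv V wv wo wu R u) + (\<Sum>v\<in>V - R. int (wu {u, v})) - (\<Sum>v\<in>V - R. int (wo u v)) - int (wv u)"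
    for u
    by (simp add: red_excess_def red_wv_def red_deficit_def sum_subtractf)
  show ?thesis
    using arg_cong[OF set_weight_restrict_ext[OF assms, of "red_wv V wv wo wu R" wo wu wv], of int]
    by (simp add: excess sum.distrib sum_subtractf of_nat_sum)
qed

lemma red_value_le_alpha_red:
  assumes "finite V" "R \<subseteq> V" "stable_set R \<theta> S"
  shows "int (set_weight V wv wo wu S) + (\<Sum>u\<in>S. red_excess V wv wo wu R u)
    \<le> int (alpha_red V \<theta> wv wo wu R)"
proof -
  have "finite R"
    using assms(1,2) by (rule finite_subset[rotated])
  moreover have "S \<subseteq> R"
    using assms(3) by (simp add: stable_set_def)
  ultimately show ?thesis
    using set_weight_le_alpha[OF _ assms(3), of "red_wv V wv wo wu R" wo wu]
      set_weight_red_ext[OF assms(1,2), of S wv wo wu]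
    unfolding alpha_red_def by simp
qed

lemma alpha_red_attained:
  assumes "finite V" "R \<subseteq> V"
  obtains S where "stable_set R \<theta> S"
    "int (alpha_red V \<theta> wv wo wu R) = int (set_weight V wv wo wu S) + (\<Sum>u\<in>S. red_excess V wv wo wu R u)"
proof -
  have "finite R"
    using assms by (rule finite_subset[rotated])
  then obtain S where S: "stable_set R \<theta> S"
    and opt: "alpha R \<theta> (red_wv V wv wo wu R) wo wu = set_weight R (red_wv V wv wo wu R) wo wu S"
    by (rule alpha_attained)
  have "S \<subseteq> R"
    using S by (simp add: stable_set_def)
  then show ?thesis
    using that[OF S] set_weight_red_ext[OF assms, of S wv wo wu] unfolding alpha_red_def opt by simp
qed

lemma weight_function_ordered_le:
  "weight_function V \<theta> wv wo wu \<Longrightarrow> u \<in> V \<Longrightarrow> v \<in> V \<Longrightarrow> u \<noteq> v \<Longrightarrow> wo u v \<le> wu {u, v}"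
  unfolding weight_function_def by blast

lemma red_deficit_le_sum:
  assumes "weight_function V \<theta> wv wo wu" "finite V" "V - R \<subseteq> A" "A \<subseteq> V" "u \<in> V" "u \<notin> A"
  shows "red_deficit V wo wu R u \<le> (\<Sum>v\<in>A. int (wu {u, v}) - int (wo u v))"
  unfolding red_deficit_def
proof (rule sum_mono2)
  show "finite A"
    using assms(2,4) by (rule finite_subset[rotated])
  fix v assume "v \<in> A - (V - R)"
  then have "wo u v \<le> wu {u, v}"
    using assms(4-6) by (intro weight_function_ordered_le[OF assms(1)]) auto
  then show "0 \<le> int (wu {u, v}) - int (wo u v)"
    by simp
qed (use assms(3) in simp)

lemma red_deficit_nonneg:
  assumes "weight_function V \<theta> wv wo wu" "R \<subseteq> V" "u \<in> R"
  shows "0 \<le> red_deficit V wo wu R u"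
  unfolding red_deficit_def
proof (rule sum_nonneg)
  fix v assume "v \<in> V - R"
  then have "wo u v \<le> wu {u, v}"
    using assms(2,3) by (intro weight_function_ordered_le[OF assms(1)]) auto
  then show "0 \<le> int (wu {u, v}) - int (wo u v)"
    by simp
qed

lemma red_excess_le_deficit:
  "weight_function V \<theta> wv wo wu \<Longrightarrow> R \<subseteq> V \<Longrightarrow> u \<in> R
    \<Longrightarrow> red_excess V wv wo wu R u \<le> red_deficit V wo wu R u"
  using red_deficit_nonneg[of V \<theta> wv wo wu R u] by (simp add: red_excess_def)

lemma red_excess_antimono:
  assumes "weight_function V \<theta> wv wo wu" "finite V" "R \<subseteq> R'" "R' \<subseteq> V" "u \<in> R"
  shows "red_excess V wv wo wu R' u \<le> red_excess V wv wo wu R u"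
proof -
  have "red_deficit V wo wu R' u \<le> red_deficit V wo wu R u"
    using red_deficit_le_sum[OF assms(1,2), of R' "V - R" u] assms(3-5)
    unfolding red_deficit_def[of V wo wu R] by auto
  then show ?thesis
    unfolding red_excess_def by simp
qed

lemma set_weight_Diff_deficit:
  assumes "weight_function V \<theta> wv wo wu" "finite V" "T \<subseteq> S" "S \<subseteq> R" "R \<subseteq> V"
  shows "int (set_weight V wv wo wu S) + (\<Sum>u\<in>T. red_deficit V wo wu R u)
    \<le> int (set_weight V wv wo wu (S - T)) + (\<Sum>u\<in>T. int (wv u))"
proof -
  have "(\<Sum>u\<in>T. red_deficit V wo wu R u) \<le> (\<Sum>u\<in>T. \<Sum>v\<in>V - S. int (wu {u, v}) - int (wo u v))"
    by (rule sum_mono, rule red_deficit_le_sum[OF assms(1,2)]) (use assms(3-5) in auto)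
  moreover have "int (set_weight V wv wo wu S + (\<Sum>u\<in>T. \<Sum>v\<in>V - S. wu {u, v}))
      \<le> int (set_weight V wv wo wu (S - T) + (\<Sum>u\<in>T. wv u) + (\<Sum>u\<in>T. \<Sum>v\<in>V - S. wo u v))"
    using set_weight_Diff[OF assms(2) _ assms(3), of wv wo wu] assms(4,5) by (simp only: of_nat_le_iff)
  ultimately show ?thesis
    by (simp add: sum_subtractf)
qed

lemma alpha_red_mono:
  assumes "weight_function V \<theta> wv wo wu" "finite V" "R \<subseteq> R'" "R' \<subseteq> V"
  shows "alpha_red V \<theta> wv wo wu R \<le> alpha_red V \<theta> wv wo wu R'"
proof -
  have RV: "R \<subseteq> V"
    using assms(3,4) by blast
  obtain S where S: "stable_set R \<theta> S"
    and opt: "int (alpha_red V \<theta> wv wo wu R)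
      = int (set_weight V wv wo wu S) + (\<Sum>u\<in>S. red_excess V wv wo wu R u)"
    using alpha_red_attained[OF assms(2) RV] .
  have SR: "S \<subseteq> R"
    using S by (simp add: stable_set_def)
  have fS: "finite S"
    using assms(2) SR RV by (meson finite_subset)
  define T where "T = {u \<in> S. 0 < red_excess V wv wo wu R u}"
  have TS: "T \<subseteq> S"
    by (auto simp: T_def)
  have "(\<Sum>u\<in>S. red_excess V wv wo wu R u) = (\<Sum>u\<in>T. red_excess V wv wo wu R u)"
    using red_excess_nonneg[of V wv wo wu R] by (intro sum.mono_neutral_right fS TS) (auto simp: T_def less_le)
  also have "\<dots> = (\<Sum>u\<in>T. red_deficit V wo wu R u) - (\<Sum>u\<in>T. int (wv u))"
    by (simp add: sum_subtractf[symmetric]) (rule sum.cong, auto simp: T_def red_excess_def)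
  finally have "int (alpha_red V \<theta> wv wo wu R) \<le> int (set_weight V wv wo wu (S - T))"
    using opt set_weight_Diff_deficit[OF assms(1,2) TS SR RV] by linarith
  also have "\<dots> \<le> int (alpha_red V \<theta> wv wo wu R')"
  proof -
    have "stable_set R' \<theta> (S - T)"
      using S assms(3) by (auto simp: stable_set_def)
    from red_value_le_alpha_red[OF assms(2,4) this, of wv wo wu]
    show ?thesis
      using sum_nonneg[of "S - T" "red_excess V wv wo wu R'", OF red_excess_nonneg]
      by linarith
  qed
  finally show ?thesis
    by simp
qed

lemma alpha_red_le_add_weight:
  assumes "weight_function V \<theta> wv wo wu" "finite V" "R \<subseteq> R'" "R' \<subseteq> V"
  shows "alpha_red V \<theta> wv wo wu R' \<le> alpha_red V \<theta> wv wo wu R + (\<Sum>u\<in>R' - R. wv u)"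
proof -
  obtain S where S: "stable_set R' \<theta> S"
    and opt: "int (alpha_red V \<theta> wv wo wu R')
      = int (set_weight V wv wo wu S) + (\<Sum>u\<in>S. red_excess V wv wo wu R' u)"
    using alpha_red_attained[OF assms(2,4)] .
  have SR': "S \<subseteq> R'"
    using S by (simp add: stable_set_def)
  have fS: "finite S"
    using assms(2) SR' assms(4) by (meson finite_subset)
  define X where "X = S - R"
  have XS: "X \<subseteq> S"
    by (auto simp: X_def)
  have stable: "stable_set R \<theta> (S - X)"
    using S by (auto simp: stable_set_def X_def)
  have "(\<Sum>u\<in>S. red_excess V wv wo wu R' u)
      = (\<Sum>u\<in>S - X. red_excess V wv wo wu R' u) + (\<Sum>u\<in>X. red_excess V wv wo wu R' u)"
    by (rule sum.subset_diff[OF XS fS])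
  moreover have "(\<Sum>u\<in>X. red_excess V wv wo wu R' u) \<le> (\<Sum>u\<in>X. red_deficit V wo wu R' u)"
    using XS SR' by (intro sum_mono red_excess_le_deficit[OF assms(1,4)]) auto
  moreover have "(\<Sum>u\<in>S - X. red_excess V wv wo wu R' u) \<le> (\<Sum>u\<in>S - X. red_excess V wv wo wu R u)"
    by (intro sum_mono red_excess_antimono[OF assms]) (auto simp: X_def)
  moreover have "(\<Sum>u\<in>X. int (wv u)) \<le> (\<Sum>u\<in>R' - R. int (wv u))"
    using SR' by (intro sum_mono2) (auto simp: X_def finite_subset[OF _ assms(2)] assms(4))
  ultimately have "int (alpha_red V \<theta> wv wo wu R')
      \<le> int (set_weight V wv wo wu (S - X)) + (\<Sum>u\<in>S - X. red_excess V wv wo wu R u)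
        + (\<Sum>u\<in>R' - R. int (wv u))"
    using opt set_weight_Diff_deficit[OF assms(1,2) XS SR' assms(4)] by linarith
  also have "\<dots> \<le> int (alpha_red V \<theta> wv wo wu R) + (\<Sum>u\<in>R' - R. int (wv u))"
    using red_value_le_alpha_red[OF assms(2) _ stable] assms(3,4) by force
  finally show ?thesis
    by (simp add: of_nat_sum[symmetric] del: of_nat_sum)
qed

theorem proposition3p8:
  fixes V :: "'a set" and \<theta> :: "'a set \<Rightarrow> int"
    and wv :: "'a \<Rightarrow> nat" and wo :: "'a \<Rightarrow> 'a \<Rightarrow> nat" and wu :: "'a set \<Rightarrow> nat"
    and R1 R2 :: "'a set"
  assumes "trigraph V \<theta>" and "weight_function V \<theta> wv wo wu"
    and "R1 \<subseteq> V" and "R2 \<subseteq> V" and "R1 \<inter> R2 = {}"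
  shows "alpha_red V \<theta> wv wo wu R1 \<le> alpha_red V \<theta> wv wo wu (R1 \<union> R2)
    \<and> alpha_red V \<theta> wv wo wu (R1 \<union> R2) \<le> alpha_red V \<theta> wv wo wu R1 + (\<Sum>u\<in>R2. wv u)"
proof -
  have "finite V"
    using assms(1) by (simp add: trigraph_def)
  moreover have "R1 \<union> R2 - R1 = R2"
    using assms(5) by blast
  ultimately show ?thesis
    using alpha_red_mono[OF assms(2)] alpha_red_le_add_weight[OF assms(2)] assms(3,4)
    by (metis Un_least Un_upper1)
qed

end
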